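(* Let $R$ be a commutative ring and $S$ a multiplicative subset of $R$. If $R$ is a $u$-$S$-coherent ring with respect to some $s\in S$, then the localization $R_s=R[1/s]$ is a coherent ring.
   Context: An $R$-module $M$ is $u$-$S$-finitely presented with respect to $s\in S$ if there is an exact sequence $0\to T_1\to F\to M\to T_2\to 0$ with $F$ finitely presented and $sT_1=sT_2=0$. $R$ is a $u$-$S$-coherent ring with respect to $s\in S$ if every finitely generated ideal of $R$ is $u$-$S$-finitely presented with respect to $s$. *)

theory Defs
  imports "HOL-Algebra.Algebra"
begin

text \<open>Elements of the free module R^n are represented as functions nat => 'a whose
  entries below n lie in the carrier and which vanish from n on.\<close>

definition vecs :: "('a, 'b) ring_scheme \<Rightarrow> nat \<Rightarrow> (nat \<Rightarrow> 'a) set" where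
  "vecs R n = {x. (\<forall>i<n. x i \<in> carrier R) \<and> (\<forall>i\<ge>n. x i = \<zero>\<^bsub>R\<^esub>)}"

definition lin_comb :: "('a, 'b) ring_scheme \<Rightarrow> nat \<Rightarrow> (nat \<Rightarrow> 'a) \<Rightarrow> (nat \<Rightarrow> 'a) \<Rightarrow> 'a" where
  "lin_comb R n x a = (\<Oplus>\<^bsub>R\<^esub> i\<in>{..<n}. x i \<otimes>\<^bsub>R\<^esub> a i)"

definition vsmult :: "('a, 'b) ring_scheme \<Rightarrow> nat \<Rightarrow> 'a \<Rightarrow> (nat \<Rightarrow> 'a) \<Rightarrow> (nat \<Rightarrow> 'a)" where
  "vsmult R n r x = (\<lambda>i. if i < n then r \<otimes>\<^bsub>R\<^esub> x i else \<zero>\<^bsub>R\<^esub>)"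

definition vspan :: "('a, 'b) ring_scheme \<Rightarrow> nat \<Rightarrow> nat \<Rightarrow> (nat \<Rightarrow> nat \<Rightarrow> 'a) \<Rightarrow> (nat \<Rightarrow> 'a) set" where
  "vspan R n m v = {y. \<exists>c. (\<forall>j<m. c j \<in> carrier R) \<and>
          y = (\<lambda>i. if i < n then (\<Oplus>\<^bsub>R\<^esub> j\<in>{..<m}. c j \<otimes>\<^bsub>R\<^esub> v j i) else \<zero>\<^bsub>R\<^esub>)}"

definition fg_submodule :: "('a, 'b) ring_scheme \<Rightarrow> nat \<Rightarrow> (nat \<Rightarrow> 'a) set \<Rightarrow> bool" where
  "fg_submodule R n K \<longleftrightarrow> (\<exists>m v. (\<forall>j<m. v j \<in> vecs R n) \<and> K = vspan R n m v)"

text \<open>An ideal I is finitely presented: there is an exact sequence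
  F_1 -> R^n -> I -> 0 with F_1 finitely generated free, i.e. a surjection
  R^n -> I (given by generators a) whose kernel (the syzygies) is finitely generated.\<close>
definition fp_ideal :: "('a, 'b) ring_scheme \<Rightarrow> 'a set \<Rightarrow> bool" where
  "fp_ideal R I \<longleftrightarrow>
     (\<exists>n a. (\<forall>i<n. a i \<in> carrier R)
        \<and> I = {y. \<exists>x\<in>vecs R n. y = lin_comb R n x a}
        \<and> fg_submodule R n {x \<in> vecs R n. lin_comb R n x a = \<zero>\<^bsub>R\<^esub>})"

definition coherent_ring :: "('a, 'b) ring_scheme \<Rightarrow> bool" where
  "coherent_ring R \<longleftrightarrow>
     (\<forall>A. finite A \<and> A \<subseteq> carrier R \<longrightarrow> fp_ideal R (Idl\<^bsub>R\<^esub> A))"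

text \<open>I is u-S-finitely presented w.r.t. s: there is an exact sequence
  0 -> T_1 -> F -> I -> T_2 -> 0 with F finitely presented and s T_1 = s T_2 = 0.
  We write F = R^n / K with K a finitely generated submodule of R^n (every finitely
  presented module has this form); the map F -> I is induced by the map
  R^n -> R, x |-> sum x_i b_i, which vanishes on K and takes values in I.
  Then T_1 is the kernel {x. sum x_i b_i = 0} / K and T_2 = I / image.\<close>
definition u_S_fp_ideal :: "('a, 'b) ring_scheme \<Rightarrow> 'a \<Rightarrow> 'a set \<Rightarrow> bool" where
  "u_S_fp_ideal R s I \<longleftrightarrow>
     (\<exists>n K b. fg_submodule R n K
        \<and> (\<forall>i<n. b i \<in> carrier R)
        \<and> (\<forall>x\<in>K. lin_comb R n x b = \<zero>\<^bsub>R\<^esub>)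
        \<and> (\<forall>x\<in>vecs R n. lin_comb R n x b \<in> I)
        \<and> (\<forall>x\<in>vecs R n. lin_comb R n x b = \<zero>\<^bsub>R\<^esub> \<longrightarrow> vsmult R n s x \<in> K)
        \<and> (\<forall>y\<in>I. \<exists>x\<in>vecs R n. s \<otimes>\<^bsub>R\<^esub> y = lin_comb R n x b))"

definition u_S_coherent :: "('a, 'b) ring_scheme \<Rightarrow> 'a \<Rightarrow> bool" where
  "u_S_coherent R s \<longleftrightarrow>
     (\<forall>A. finite A \<and> A \<subseteq> carrier R \<longrightarrow> u_S_fp_ideal R s (Idl\<^bsub>R\<^esub> A))"

definition multiplicative_subset :: "('a, 'b) ring_scheme \<Rightarrow> 'a set \<Rightarrow> bool" where
  "multiplicative_subset R S \<longleftrightarrow> S \<subseteq> carrier R \<and> \<one>\<^bsub>R\<^esub> \<in> S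
     \<and> (\<forall>x\<in>S. \<forall>y\<in>S. x \<otimes>\<^bsub>R\<^esub> y \<in> S)"

text \<open>A pair (a, m) represents the fraction a / s^m.\<close>
definition loc_rel :: "('a, 'b) ring_scheme \<Rightarrow> 'a \<Rightarrow> (('a \<times> nat) \<times> ('a \<times> nat)) set" where
  "loc_rel R s = {((a, m), (b, k)). a \<in> carrier R \<and> b \<in> carrier R \<and>
     (\<exists>t::nat. s [^]\<^bsub>R\<^esub> t \<otimes>\<^bsub>R\<^esub>
        (a \<otimes>\<^bsub>R\<^esub> s [^]\<^bsub>R\<^esub> k \<ominus>\<^bsub>R\<^esub> b \<otimes>\<^bsub>R\<^esub> s [^]\<^bsub>R\<^esub> m) = \<zero>\<^bsub>R\<^esub>)}"

definition loc_class :: "('a, 'b) ring_scheme \<Rightarrow> 'a \<Rightarrow> 'a \<times> nat \<Rightarrow> ('a \<times> nat) set" where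
  "loc_class R s p = loc_rel R s `` {p}"

definition loc_mult :: "('a, 'b) ring_scheme \<Rightarrow> 'a \<Rightarrow> ('a \<times> nat) set \<Rightarrow> ('a \<times> nat) set \<Rightarrow> ('a \<times> nat) set" where
  "loc_mult R s U V = Union {Z. \<exists>a m b k. (a, m) \<in> U \<and> (b, k) \<in> V \<and> Z = loc_class R s (a \<otimes>\<^bsub>R\<^esub> b, m + k)}"

definition loc_add :: "('a, 'b) ring_scheme \<Rightarrow> 'a \<Rightarrow> ('a \<times> nat) set \<Rightarrow> ('a \<times> nat) set \<Rightarrow> ('a \<times> nat) set" where
  "loc_add R s U V = Union {Z. \<exists>a m b k. (a, m) \<in> U \<and> (b, k) \<in> V \<and>
     Z = loc_class R s ((a \<otimes>\<^bsub>R\<^esub> (s [^]\<^bsub>R\<^esub> k)) \<oplus>\<^bsub>R\<^esub> (b \<otimes>\<^bsub>R\<^esub> (s [^]\<^bsub>R\<^esub> m)), m + k)}"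

definition localization :: "('a, 'b) ring_scheme \<Rightarrow> 'a \<Rightarrow> ('a \<times> nat) set ring" where
  "localization R s =
    \<lparr> carrier = (carrier R \<times> UNIV) // loc_rel R s,
      monoid.mult = loc_mult R s,
      one = loc_class R s (\<one>\<^bsub>R\<^esub>, 0),
      ring.zero = loc_class R s (\<zero>\<^bsub>R\<^esub>, 0),
      ring.add = loc_add R s \<rparr>"

end

theory Submission
  imports Defs
begin

text \<open>
  A finitely generated ideal J of R[1/s] has generators with a common denominator,
  J = (a_1/s^E, ..., a_k/s^E), so J is the extension of I = (a_1, ..., a_k).
  The u-S-finite presentation of I provides b_1, ..., b_n with s I \<subseteq> (b) \<subseteq> I and a
  finitely generated K \<subseteq> R^n of syzygies of b containing s times every syzygy.
  As s is a unit in R[1/s], the images of b generate J; and a syzygy of these images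
  over R[1/s] becomes, after clearing denominators and multiplying by a power of s,
  a syzygy over R, so the images of generators of K span all syzygies.
\<close>

section \<open>Linear combinations over a commutative ring\<close>

context cring
begin

lemma lin_comb_closed:
  "x \<in> vecs R n \<Longrightarrow> \<forall>i<n. a i \<in> carrier R \<Longrightarrow> lin_comb R n x a \<in> carrier R"
  unfolding lin_comb_def vecs_def by (intro finsum_closed) auto

lemma vsmult_closed: "r \<in> carrier R \<Longrightarrow> x \<in> vecs R n \<Longrightarrow> vsmult R n r x \<in> vecs R n"
  by (auto simp: vecs_def vsmult_def)

lemma lin_comb_vsmult:
  assumes "r \<in> carrier R" "x \<in> vecs R n" "\<forall>i<n. a i \<in> carrier R"
  shows "lin_comb R n (vsmult R n r x) a = r \<otimes> lin_comb R n x a"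
proof -
  have "r \<otimes> lin_comb R n x a = (\<Oplus>i\<in>{..<n}. r \<otimes> (x i \<otimes> a i))"
    unfolding lin_comb_def using assms by (intro finsum_rdistr) (auto simp: vecs_def)
  also have "\<dots> = lin_comb R n (vsmult R n r x) a"
    unfolding lin_comb_def using assms by (intro finsum_cong) (auto simp: vecs_def vsmult_def m_assoc)
  finally show ?thesis ..
qed

lemma lin_comb_add:
  assumes "x \<in> vecs R n" "y \<in> vecs R n" "\<forall>i<n. a i \<in> carrier R"
  shows "lin_comb R n (\<lambda>i. x i \<oplus> y i) a = lin_comb R n x a \<oplus> lin_comb R n y a"
proof -
  have "lin_comb R n x a \<oplus> lin_comb R n y a = (\<Oplus>i\<in>{..<n}. x i \<otimes> a i \<oplus> y i \<otimes> a i)"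
    unfolding lin_comb_def using assms by (intro finsum_addf [symmetric]) (auto simp: vecs_def)
  also have "\<dots> = lin_comb R n (\<lambda>i. x i \<oplus> y i) a"
    unfolding lin_comb_def using assms by (intro finsum_cong) (auto simp: vecs_def l_distr)
  finally show ?thesis ..
qed

lemma lin_comb_unit_vec:
  assumes "\<forall>i<n. a i \<in> carrier R" "j < n"
  shows "lin_comb R n (\<lambda>i. if i = j then \<one> else \<zero>) a = a j"
proof -
  have "lin_comb R n (\<lambda>i. if i = j then \<one> else \<zero>) a = (\<Oplus>i\<in>{..<n}. if i = j then a i else \<zero>)"
    unfolding lin_comb_def using assms by (intro finsum_cong) (auto simp: simp_implies_def)
  also have "\<dots> = a j" using assms by (intro add.finprod_singleton_swap) auto
  finally show ?thesis .
qed

lemma unit_vec_closed: "j < n \<Longrightarrow> (\<lambda>i. if i = j then \<one> else \<zero>) \<in> vecs R n"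
  by (auto simp: vecs_def)

lemma ideal_lin_combs:
  assumes a: "\<forall>i<n. a i \<in> carrier R"
  shows "ideal {y. \<exists>x\<in>vecs R n. y = lin_comb R n x a} R"
    (is "ideal ?L R")
proof (rule idealI [OF ring_axioms])
  show "subgroup ?L (add_monoid R)"
  proof (rule add.subgroupI)
    show "?L \<subseteq> carrier R"
      using lin_comb_closed a by auto
    have "(\<lambda>_. \<zero>) \<in> vecs R n" by (simp add: vecs_def)
    then show "?L \<noteq> {}" by blast
  next
    fix y assume "y \<in> ?L"
    then obtain x where x: "x \<in> vecs R n" "y = lin_comb R n x a" by blast
    then have "\<ominus> y = lin_comb R n (vsmult R n (\<ominus> \<one>) x) a"
      using a by (simp add: lin_comb_vsmult lin_comb_closed l_minus)
    then show "\<ominus> y \<in> ?L"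
      using vsmult_closed x(1) by blast
  next
    fix y z assume "y \<in> ?L" "z \<in> ?L"
    then obtain x x' where x: "x \<in> vecs R n" "y = lin_comb R n x a" "x' \<in> vecs R n" "z = lin_comb R n x' a"
      by blast
    then have "y \<oplus> z = lin_comb R n (\<lambda>i. x i \<oplus> x' i) a"
      using lin_comb_add a by simp
    moreover have "(\<lambda>i. x i \<oplus> x' i) \<in> vecs R n" using x by (auto simp: vecs_def)
    ultimately show "y \<oplus> z \<in> ?L"
      by blast
  qed
next
  fix y r assume "y \<in> ?L" "r \<in> carrier R"
  then obtain x where x: "x \<in> vecs R n" "y = lin_comb R n x a" by blast
  then show "r \<otimes> y \<in> ?L"
    using lin_comb_vsmult [OF \<open>r \<in> carrier R\<close> x(1) a] vsmult_closed [OF \<open>r \<in> carrier R\<close> x(1)]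
    by (auto intro!: bexI [of _ "vsmult R n r x"])
  then show "y \<otimes> r \<in> ?L"
    using x \<open>r \<in> carrier R\<close> lin_comb_closed a by (simp add: m_comm)
qed

lemma finsum_in_ideal:
  assumes "ideal J R" "finite A" "\<forall>i\<in>A. f i \<in> J"
  shows "finsum R f A \<in> J"
  using assms(2,3)
proof (induction A rule: finite_induct)
  case empty
  then show ?case using assms(1) by (simp add: additive_subgroup.zero_closed ideal.axioms(1))
next
  case (insert i A)
  have "J \<subseteq> carrier R" using assms(1) by (simp add: additive_subgroup.a_subset ideal.axioms(1))
  then have "finsum R f (insert i A) = f i \<oplus> finsum R f A"
    using insert by (intro finsum_insert) auto
  then show ?case using insert assms(1) by (simp add: additive_subgroup.a_closed ideal.axioms(1))
qed

lemma genideal_eq_lin_combs: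
  assumes a: "\<forall>i<n. a i \<in> carrier R"
  shows "Idl (a ` {..<n}) = {y. \<exists>x\<in>vecs R n. y = lin_comb R n x a}"
proof
  have "a i \<in> {y. \<exists>x\<in>vecs R n. y = lin_comb R n x a}" if "i < n" for i
    using lin_comb_unit_vec [OF a that, symmetric] unit_vec_closed [of i n] that by blast
  then have "a ` {..<n} \<subseteq> {y. \<exists>x\<in>vecs R n. y = lin_comb R n x a}" by blast
  then show "Idl (a ` {..<n}) \<subseteq> {y. \<exists>x\<in>vecs R n. y = lin_comb R n x a}"
    by (intro genideal_minimal ideal_lin_combs a)
next
  have J: "ideal (Idl (a ` {..<n})) R" using a by (intro genideal_ideal) auto
  have "a i \<in> Idl (a ` {..<n})" if "i < n" for i
    using genideal_self [of "a ` {..<n}"] a that by auto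
  then have "lin_comb R n x a \<in> Idl (a ` {..<n})" if "x \<in> vecs R n" for x
    unfolding lin_comb_def using that
    by (intro finsum_in_ideal [OF J]) (auto simp: vecs_def ideal.I_l_closed [OF J])
  then show "{y. \<exists>x\<in>vecs R n. y = lin_comb R n x a} \<subseteq> Idl (a ` {..<n})" by blast
qed

lemma vspan_subset_vecs: "\<forall>j<m. v j \<in> vecs R n \<Longrightarrow> vspan R n m v \<subseteq> vecs R n"
  by (auto simp: vspan_def vecs_def intro!: finsum_closed)

lemma gen_in_vspan:
  assumes v: "\<forall>j<m. v j \<in> vecs R n" and "j < m"
  shows "v j \<in> vspan R n m v"
proof -
  have "v j i = (\<Oplus>l\<in>{..<m}. (if l = j then \<one> else \<zero>) \<otimes> v l i)" if "i < n" for i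
  proof -
    have "(\<Oplus>l\<in>{..<m}. (if l = j then \<one> else \<zero>) \<otimes> v l i) = (\<Oplus>l\<in>{..<m}. if l = j then v l i else \<zero>)"
      using v that by (intro finsum_cong) (auto simp: vecs_def simp_implies_def)
    also have "\<dots> = v j i"
      using v that \<open>j < m\<close> by (intro add.finprod_singleton_swap) (auto simp: vecs_def)
    finally show ?thesis ..
  qed
  then have "v j = (\<lambda>i. if i < n then (\<Oplus>l\<in>{..<m}. (if l = j then \<one> else \<zero>) \<otimes> v l i) else \<zero>)"
    using v \<open>j < m\<close> by (auto simp: vecs_def)
  then show ?thesis
    unfolding vspan_def by (intro CollectI exI [of _ "\<lambda>l. if l = j then \<one> else \<zero>"]) auto
qed

lemma vsmult_vspan:
  assumes r: "r \<in> carrier R" and v: "\<forall>j<m. v j \<in> vecs R n" and y: "y \<in> vspan R n m v"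
  shows "vsmult R n r y \<in> vspan R n m v"
proof -
  obtain c where c: "\<forall>j<m. c j \<in> carrier R"
    and y_eq: "y = (\<lambda>i. if i < n then (\<Oplus>j\<in>{..<m}. c j \<otimes> v j i) else \<zero>)"
    using y unfolding vspan_def by blast
  have "r \<otimes> (\<Oplus>j\<in>{..<m}. c j \<otimes> v j i) = (\<Oplus>j\<in>{..<m}. (r \<otimes> c j) \<otimes> v j i)" if "i < n" for i
  proof -
    have "r \<otimes> (\<Oplus>j\<in>{..<m}. c j \<otimes> v j i) = (\<Oplus>j\<in>{..<m}. r \<otimes> (c j \<otimes> v j i))"
      using r c v that by (intro finsum_rdistr) (auto simp: vecs_def)
    also have "\<dots> = (\<Oplus>j\<in>{..<m}. (r \<otimes> c j) \<otimes> v j i)"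
      using r c v that by (intro finsum_cong) (auto simp: vecs_def m_assoc simp_implies_def)
    finally show ?thesis .
  qed
  then have "vsmult R n r y = (\<lambda>i. if i < n then (\<Oplus>j\<in>{..<m}. (r \<otimes> c j) \<otimes> v j i) else \<zero>)"
    unfolding y_eq vsmult_def by auto
  then show ?thesis
    unfolding vspan_def using r c by (intro CollectI exI [of _ "\<lambda>j. r \<otimes> c j"]) auto
qed

lemma finsum_swap:
  assumes "finite A" "finite B" "\<And>i j. i \<in> A \<Longrightarrow> j \<in> B \<Longrightarrow> f i j \<in> carrier R"
  shows "(\<Oplus>i\<in>A. \<Oplus>j\<in>B. f i j) = (\<Oplus>j\<in>B. \<Oplus>i\<in>A. f i j)"
  using assms(1,3)
proof (induction A rule: finite_induct)
  case empty
  then show ?case by (simp add: finsum_zero)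
next
  case (insert i A)
  then have "(\<Oplus>i\<in>insert i A. \<Oplus>j\<in>B. f i j) = (\<Oplus>j\<in>B. f i j) \<oplus> (\<Oplus>j\<in>B. \<Oplus>i\<in>A. f i j)"
    by (simp add: finsum_insert finsum_closed Pi_def)
  also have "\<dots> = (\<Oplus>j\<in>B. f i j \<oplus> (\<Oplus>i\<in>A. f i j))"
    using insert by (intro finsum_addf [symmetric]) (auto intro!: finsum_closed)
  also have "\<dots> = (\<Oplus>j\<in>B. \<Oplus>i\<in>insert i A. f i j)"
    using insert by (intro finsum_cong) (auto simp: finsum_insert)
  finally show ?case .
qed

lemma lin_comb_vspan_eq_zero:
  assumes v: "\<forall>j<m. v j \<in> vecs R n" and a: "\<forall>i<n. a i \<in> carrier R"
    and syz: "\<forall>j<m. lin_comb R n (v j) a = \<zero>" and y: "y \<in> vspan R n m v"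
  shows "lin_comb R n y a = \<zero>"
proof -
  obtain c where c: "\<forall>j<m. c j \<in> carrier R"
    and y_eq: "y = (\<lambda>i. if i < n then (\<Oplus>j\<in>{..<m}. c j \<otimes> v j i) else \<zero>)"
    using y unfolding vspan_def by blast
  have v_closed: "v j i \<in> carrier R" if "j < m" "i < n" for i j
    using v that by (simp add: vecs_def)
  have "lin_comb R n y a = (\<Oplus>i\<in>{..<n}. \<Oplus>j\<in>{..<m}. c j \<otimes> (v j i \<otimes> a i))"
    unfolding lin_comb_def y_eq using c a v_closed
    by (intro finsum_cong) (auto simp: finsum_ldistr m_assoc simp_implies_def intro!: finsum_cong)
  also have "\<dots> = (\<Oplus>j\<in>{..<m}. \<Oplus>i\<in>{..<n}. c j \<otimes> (v j i \<otimes> a i))"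
    using c a v_closed by (intro finsum_swap) auto
  also have "\<dots> = (\<Oplus>j\<in>{..<m}. c j \<otimes> lin_comb R n (v j) a)"
    unfolding lin_comb_def using c a v_closed by (intro finsum_cong) (auto simp: finsum_rdistr)
  also have "\<dots> = \<zero>"
    using c syz by (intro add.finprod_one_eqI) auto
  finally show ?thesis .
qed

end

definition vec_map :: "('c, 'd) ring_scheme \<Rightarrow> nat \<Rightarrow> ('a \<Rightarrow> 'c) \<Rightarrow> (nat \<Rightarrow> 'a) \<Rightarrow> nat \<Rightarrow> 'c"
  where "vec_map S n h x = (\<lambda>i. if i < n then h (x i) else \<zero>\<^bsub>S\<^esub>)"

context ring_hom_cring
begin

lemma vec_map_closed: "x \<in> vecs R n \<Longrightarrow> vec_map S n h x \<in> vecs S n"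
  by (auto simp: vecs_def vec_map_def)

lemma hom_lin_comb:
  assumes "x \<in> vecs R n" "\<forall>i<n. a i \<in> carrier R"
  shows "h (lin_comb R n x a) = lin_comb S n (vec_map S n h x) (\<lambda>i. h (a i))"
  unfolding lin_comb_def using assms
  by (subst hom_finsum) (auto simp: vecs_def vec_map_def Pi_def intro!: S.finsum_cong)

lemma vec_map_vspan:
  assumes v: "\<forall>j<m. v j \<in> vecs R n" and y: "y \<in> vspan R n m v"
  shows "vec_map S n h y \<in> vspan S n m (\<lambda>j. vec_map S n h (v j))"
proof -
  obtain c where c: "\<forall>j<m. c j \<in> carrier R"
    and y_eq: "y = (\<lambda>i. if i < n then (\<Oplus>j\<in>{..<m}. c j \<otimes> v j i) else \<zero>)"
    using y unfolding vspan_def by blast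
  have "h (\<Oplus>j\<in>{..<m}. c j \<otimes> v j i) = (\<Oplus>\<^bsub>S\<^esub> j\<in>{..<m}. h (c j) \<otimes>\<^bsub>S\<^esub> h (v j i))"
    if "i < n" for i
    using c v that by (subst hom_finsum) (auto simp: vecs_def Pi_def intro!: S.finsum_cong)
  then have "vec_map S n h y =
      (\<lambda>i. if i < n then (\<Oplus>\<^bsub>S\<^esub> j\<in>{..<m}. h (c j) \<otimes>\<^bsub>S\<^esub> vec_map S n h (v j) i) else \<zero>\<^bsub>S\<^esub>)"
    by (auto simp: y_eq vec_map_def fun_eq_iff)
  then show ?thesis
    unfolding vspan_def using c by (intro CollectI exI [of _ "\<lambda>j. h (c j)"]) auto
qed

end

section \<open>The localization R[1/s]\<close>

locale localization_away = cring R for R (structure) +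
  fixes s assumes s_closed [simp]: "s \<in> carrier R"
begin

abbreviation frac :: "'a \<Rightarrow> nat \<Rightarrow> ('a \<times> nat) set"
  where "frac a m \<equiv> loc_class R s (a, m)"

abbreviation Rs :: "('a \<times> nat) set ring"
  where "Rs \<equiv> localization R s"

lemma loc_rel_iff:
  "((a, m), (b, k)) \<in> loc_rel R s \<longleftrightarrow> a \<in> carrier R \<and> b \<in> carrier R \<and>
     (\<exists>t::nat. s [^] t \<otimes> a \<otimes> s [^] k = s [^] t \<otimes> b \<otimes> s [^] m)"
proof -
  have "s [^] t \<otimes> (a \<otimes> s [^] k \<ominus> b \<otimes> s [^] m) = \<zero> \<longleftrightarrow>
      s [^] t \<otimes> a \<otimes> s [^] k = s [^] t \<otimes> b \<otimes> s [^] m"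
    if "a \<in> carrier R" "b \<in> carrier R" for t :: nat
  proof -
    have "s [^] t \<otimes> (a \<otimes> s [^] k \<ominus> b \<otimes> s [^] m) = s [^] t \<otimes> a \<otimes> s [^] k \<ominus> s [^] t \<otimes> b \<otimes> s [^] m"
      using that by (simp add: minus_eq r_distr r_minus m_assoc)
    then show ?thesis using that by simp
  qed
  then show ?thesis unfolding loc_rel_def by auto
qed

lemma loc_rel_equiv: "equiv (carrier R \<times> UNIV) (loc_rel R s)"
proof (rule equivI)
  show "refl_on (carrier R \<times> UNIV) (loc_rel R s)"
    by (auto simp: refl_on_def loc_rel_iff)
  show "sym (loc_rel R s)"
    by (auto simp: sym_def loc_rel_iff) metis
  show "trans (loc_rel R s)"
  proof (rule transI, clarify)
    fix a m b k c l
    assume "((a, m), b, k) \<in> loc_rel R s" "((b, k), c, l) \<in> loc_rel R s"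
    then obtain t u :: nat where carr: "a \<in> carrier R" "b \<in> carrier R" "c \<in> carrier R"
      and ab: "s [^] t \<otimes> a \<otimes> s [^] k = s [^] t \<otimes> b \<otimes> s [^] m"
      and bc: "s [^] u \<otimes> b \<otimes> s [^] l = s [^] u \<otimes> c \<otimes> s [^] k"
      by (auto simp: loc_rel_iff)
    have "s [^] (t + u + k) \<otimes> a \<otimes> s [^] l = (s [^] t \<otimes> a \<otimes> s [^] k) \<otimes> (s [^] u \<otimes> s [^] l)"
      using carr by (simp add: nat_pow_mult [symmetric] m_ac)
    also have "\<dots> = (s [^] t \<otimes> b \<otimes> s [^] m) \<otimes> (s [^] u \<otimes> s [^] l)"
      by (simp only: ab)
    also have "\<dots> = (s [^] u \<otimes> b \<otimes> s [^] l) \<otimes> (s [^] t \<otimes> s [^] m)"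
      using carr by (simp add: m_ac)
    also have "\<dots> = (s [^] u \<otimes> c \<otimes> s [^] k) \<otimes> (s [^] t \<otimes> s [^] m)"
      by (simp only: bc)
    also have "\<dots> = s [^] (t + u + k) \<otimes> c \<otimes> s [^] m"
      using carr by (simp add: nat_pow_mult [symmetric] m_ac)
    finally show "((a, m), c, l) \<in> loc_rel R s"
      using carr by (auto simp: loc_rel_iff)
  qed
qed (auto simp: loc_rel_def)

lemma frac_eq_iff:
  assumes "a \<in> carrier R" "b \<in> carrier R"
  shows "frac a m = frac b k \<longleftrightarrow> (\<exists>t::nat. s [^] t \<otimes> a \<otimes> s [^] k = s [^] t \<otimes> b \<otimes> s [^] m)"
  using equiv_class_eq_iff [OF loc_rel_equiv, of "(a, m)" "(b, k)"] assms
  by (simp add: loc_class_def loc_rel_iff)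

lemma frac_eqI:
  assumes "a \<in> carrier R" "b \<in> carrier R" "a \<otimes> s [^] k = b \<otimes> s [^] m"
  shows "frac a m = frac b k"
  using assms by (subst frac_eq_iff) (auto intro!: exI [of _ 0] simp: m_assoc)

lemma frac_closed [simp]: "a \<in> carrier R \<Longrightarrow> frac a m \<in> carrier Rs"
  by (auto simp: localization_def loc_class_def intro!: quotientI)

lemma localization_carrierE:
  assumes "x \<in> carrier Rs"
  obtains a m where "a \<in> carrier R" "x = frac a m"
proof -
  from assms obtain p where "p \<in> carrier R \<times> UNIV" "x = loc_rel R s `` {p}"
    by (auto simp: localization_def elim: quotientE)
  then show thesis using that by (cases p) (simp add: loc_class_def)
qed

lemma frac_self_mem: "a \<in> carrier R \<Longrightarrow> (a, m) \<in> frac a m"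
  using loc_rel_equiv by (auto simp: loc_class_def equiv_def refl_on_def)

text \<open>
  loc_mult and loc_add are unions over all pairs of representatives; compatibility
  with loc_rel collapses the union to a single class.
\<close>

lemma loc_op_frac:
  assumes compat: "\<And>a m a' m' b k b' k'. ((a, m), (a', m')) \<in> loc_rel R s \<Longrightarrow>
      ((b, k), (b', k')) \<in> loc_rel R s \<Longrightarrow> (f a m b k, f a' m' b' k') \<in> loc_rel R s"
    and "a \<in> carrier R" "b \<in> carrier R"
  shows "\<Union> {Z. \<exists>a' m' b' k'. (a', m') \<in> frac a m \<and> (b', k') \<in> frac b k \<and>
      Z = loc_class R s (f a' m' b' k')} = loc_class R s (f a m b k)"
proof -
  have "loc_class R s (f a' m' b' k') = loc_class R s (f a m b k)"
    if "(a', m') \<in> frac a m" "(b', k') \<in> frac b k" for a' m' b' k'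
  proof -
    have "(f a m b k, f a' m' b' k') \<in> loc_rel R s"
      using that by (intro compat) (simp_all add: loc_class_def)
    then show ?thesis
      using equiv_class_eq [OF loc_rel_equiv] by (simp add: loc_class_def)
  qed
  moreover have "(a, m) \<in> frac a m" "(b, k) \<in> frac b k"
    using assms(2,3) by (simp_all add: frac_self_mem)
  ultimately have "{Z. \<exists>a' m' b' k'. (a', m') \<in> frac a m \<and> (b', k') \<in> frac b k \<and>
      Z = loc_class R s (f a' m' b' k')} = {loc_class R s (f a m b k)}"
    by blast
  then show ?thesis by simp
qed

lemma loc_mult_frac [simp]:
  assumes "a \<in> carrier R" "b \<in> carrier R"
  shows "loc_mult R s (frac a m) (frac b k) = frac (a \<otimes> b) (m + k)"
proof -
  have compat: "((a \<otimes> b, m + k), (a' \<otimes> b', m' + k')) \<in> loc_rel R s"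
    if "((a, m), (a', m')) \<in> loc_rel R s" "((b, k), (b', k')) \<in> loc_rel R s" for a m a' m' b k b' k'
  proof -
    from that obtain t u :: nat where carr: "a \<in> carrier R" "a' \<in> carrier R" "b \<in> carrier R" "b' \<in> carrier R"
      and aa: "s [^] t \<otimes> a \<otimes> s [^] m' = s [^] t \<otimes> a' \<otimes> s [^] m"
      and bb: "s [^] u \<otimes> b \<otimes> s [^] k' = s [^] u \<otimes> b' \<otimes> s [^] k"
      by (auto simp: loc_rel_iff)
    have "s [^] (t + u) \<otimes> (a \<otimes> b) \<otimes> s [^] (m' + k') = (s [^] t \<otimes> a \<otimes> s [^] m') \<otimes> (s [^] u \<otimes> b \<otimes> s [^] k')"
      using carr by (simp add: nat_pow_mult [symmetric] m_ac)
    also have "\<dots> = (s [^] t \<otimes> a' \<otimes> s [^] m) \<otimes> (s [^] u \<otimes> b' \<otimes> s [^] k)"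
      by (simp only: aa bb)
    also have "\<dots> = s [^] (t + u) \<otimes> (a' \<otimes> b') \<otimes> s [^] (m + k)"
      using carr by (simp add: nat_pow_mult [symmetric] m_ac)
    finally show ?thesis using carr by (auto simp: loc_rel_iff)
  qed
  show ?thesis
    unfolding loc_mult_def by (rule loc_op_frac [OF compat assms])
qed

lemma loc_add_frac [simp]:
  assumes "a \<in> carrier R" "b \<in> carrier R"
  shows "loc_add R s (frac a m) (frac b k) = frac (a \<otimes> s [^] k \<oplus> b \<otimes> s [^] m) (m + k)"
proof -
  have compat: "((a \<otimes> s [^] k \<oplus> b \<otimes> s [^] m, m + k), (a' \<otimes> s [^] k' \<oplus> b' \<otimes> s [^] m', m' + k')) \<in> loc_rel R s"
    if "((a, m), (a', m')) \<in> loc_rel R s" "((b, k), (b', k')) \<in> loc_rel R s" for a m a' m' b k b' k'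
  proof -
    from that obtain t u :: nat where carr: "a \<in> carrier R" "a' \<in> carrier R" "b \<in> carrier R" "b' \<in> carrier R"
      and aa: "s [^] t \<otimes> a \<otimes> s [^] m' = s [^] t \<otimes> a' \<otimes> s [^] m"
      and bb: "s [^] u \<otimes> b \<otimes> s [^] k' = s [^] u \<otimes> b' \<otimes> s [^] k"
      by (auto simp: loc_rel_iff)
    have "s [^] (t + u) \<otimes> (a \<otimes> s [^] k \<oplus> b \<otimes> s [^] m) \<otimes> s [^] (m' + k') =
        (s [^] t \<otimes> a \<otimes> s [^] m') \<otimes> (s [^] u \<otimes> s [^] k \<otimes> s [^] k') \<oplus>
        (s [^] u \<otimes> b \<otimes> s [^] k') \<otimes> (s [^] t \<otimes> s [^] m \<otimes> s [^] m')"
      using carr by (simp add: nat_pow_mult [symmetric] m_ac l_distr r_distr)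
    also have "\<dots> = (s [^] t \<otimes> a' \<otimes> s [^] m) \<otimes> (s [^] u \<otimes> s [^] k \<otimes> s [^] k') \<oplus>
        (s [^] u \<otimes> b' \<otimes> s [^] k) \<otimes> (s [^] t \<otimes> s [^] m \<otimes> s [^] m')"
      by (simp only: aa bb)
    also have "\<dots> = s [^] (t + u) \<otimes> (a' \<otimes> s [^] k' \<oplus> b' \<otimes> s [^] m') \<otimes> s [^] (m + k)"
      using carr by (simp add: nat_pow_mult [symmetric] m_ac l_distr r_distr a_ac)
    finally show ?thesis using carr by (auto simp: loc_rel_iff)
  qed
  show ?thesis
    unfolding loc_add_def by (rule loc_op_frac [OF compat assms])
qed

lemma localization_simps [simp]:
  "x \<otimes>\<^bsub>Rs\<^esub> y = loc_mult R s x y"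
  "x \<oplus>\<^bsub>Rs\<^esub> y = loc_add R s x y"
  "\<one>\<^bsub>Rs\<^esub> = frac \<one> 0"
  "\<zero>\<^bsub>Rs\<^esub> = frac \<zero> 0"
  by (simp_all add: localization_def)

lemmas s_pow_add = nat_pow_mult [OF s_closed, symmetric]

lemma localization_cring: "cring Rs"
proof (rule cringI)
  show "abelian_group Rs"
  proof (rule abelian_groupI)
    fix x y z assume "x \<in> carrier Rs" "y \<in> carrier Rs" "z \<in> carrier Rs"
    then show "x \<oplus>\<^bsub>Rs\<^esub> y \<oplus>\<^bsub>Rs\<^esub> z = x \<oplus>\<^bsub>Rs\<^esub> (y \<oplus>\<^bsub>Rs\<^esub> z)"
      by (elim localization_carrierE) (simp, rule frac_eqI, simp_all add: s_pow_add l_distr r_distr m_ac a_ac)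
  next
    fix x y assume "x \<in> carrier Rs" "y \<in> carrier Rs"
    then show "x \<oplus>\<^bsub>Rs\<^esub> y = y \<oplus>\<^bsub>Rs\<^esub> x"
      by (elim localization_carrierE) (simp, rule frac_eqI, simp_all add: s_pow_add m_ac a_ac)
  next
    fix x assume "x \<in> carrier Rs"
    then obtain a m where a: "a \<in> carrier R" "x = frac a m" by (elim localization_carrierE)
    have "frac (\<ominus> a) m \<oplus>\<^bsub>Rs\<^esub> x = \<zero>\<^bsub>Rs\<^esub>"
      by (simp add: a, rule frac_eqI, simp_all add: a l_minus l_neg)
    then show "\<exists>y\<in>carrier Rs. y \<oplus>\<^bsub>Rs\<^esub> x = \<zero>\<^bsub>Rs\<^esub>" using a(1) a_inv_closed frac_closed by blast
  qed (auto elim!: localization_carrierE intro!: frac_eqI)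
next
  show "comm_monoid Rs"
  proof (rule comm_monoidI)
    fix x y z assume "x \<in> carrier Rs" "y \<in> carrier Rs" "z \<in> carrier Rs"
    then show "x \<otimes>\<^bsub>Rs\<^esub> y \<otimes>\<^bsub>Rs\<^esub> z = x \<otimes>\<^bsub>Rs\<^esub> (y \<otimes>\<^bsub>Rs\<^esub> z)"
      by (elim localization_carrierE) (simp, rule frac_eqI, simp_all add: s_pow_add m_ac)
  next
    fix x y assume "x \<in> carrier Rs" "y \<in> carrier Rs"
    then show "x \<otimes>\<^bsub>Rs\<^esub> y = y \<otimes>\<^bsub>Rs\<^esub> x"
      by (elim localization_carrierE) (simp, rule frac_eqI, simp_all add: s_pow_add m_ac)
  qed (auto elim!: localization_carrierE intro!: frac_eqI)
next
  fix x y z assume "x \<in> carrier Rs" "y \<in> carrier Rs" "z \<in> carrier Rs"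
  then show "(x \<oplus>\<^bsub>Rs\<^esub> y) \<otimes>\<^bsub>Rs\<^esub> z = x \<otimes>\<^bsub>Rs\<^esub> z \<oplus>\<^bsub>Rs\<^esub> y \<otimes>\<^bsub>Rs\<^esub> z"
    by (elim localization_carrierE) (simp, rule frac_eqI, simp_all add: s_pow_add l_distr r_distr m_ac a_ac)
qed

abbreviation \<iota> :: "'a \<Rightarrow> ('a \<times> nat) set"
  where "\<iota> r \<equiv> frac r 0"

lemma frac_cancel_pow: "a \<in> carrier R \<Longrightarrow> frac (a \<otimes> s [^] e) (m + e) = frac a m"
  by (rule frac_eqI) (simp_all add: s_pow_add m_ac)

lemma frac_ring_hom: "\<iota> \<in> ring_hom R Rs"
  by (rule ring_hom_memI) simp_all

lemma ring_hom_cring_frac: "ring_hom_cring R Rs \<iota>"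
  by (intro ring_hom_cring.intro ring_hom_cring_axioms.intro is_cring localization_cring frac_ring_hom)

text \<open>
  ring_hom_cring R Rs \<iota> is not interpreted: its simp rules hom_mult and hom_one run
  against loc_mult_frac and localization_simps, and simp would loop.
\<close>

lemmas frac_lin_comb = ring_hom_cring.hom_lin_comb [OF ring_hom_cring_frac]
lemmas vec_map_frac_closed = ring_hom_cring.vec_map_closed [OF ring_hom_cring_frac]
lemmas vec_map_frac_vspan = ring_hom_cring.vec_map_vspan [OF ring_hom_cring_frac]
lemmas ideal_vimage_frac = ring_hom_ring.ideal_vimage
  [OF ring_hom_ringI2 [OF ring_axioms cring.axioms(1) [OF localization_cring] frac_ring_hom]]

lemma common_denominator:
  fixes x :: "nat \<Rightarrow> ('a \<times> nat) set"
  assumes "\<forall>i<n. x i \<in> carrier Rs"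
  obtains z E where "\<forall>i<n. z i \<in> carrier R" "\<forall>i<n. x i = frac (z i) E"
proof -
  have "\<exists>z E. \<forall>i<n. z i \<in> carrier R \<and> x i = frac (z i) E"
    using assms
  proof (induction n)
    case 0
    then show ?case by simp
  next
    case (Suc n)
    then obtain z E where z: "\<forall>i<n. z i \<in> carrier R \<and> x i = frac (z i) E" by auto
    obtain a m where a: "a \<in> carrier R" "x n = frac a m"
      using Suc.prems by (meson lessI localization_carrierE)
    define z' where "z' i = (if i < n then z i \<otimes> s [^] m else a \<otimes> s [^] E)" for i
    have "z' i \<in> carrier R \<and> x i = frac (z' i) (E + m)" if "i < Suc n" for i
    proof (cases "i < n")
      case True
      then show ?thesis using z by (simp add: z'_def frac_cancel_pow)
    next
      case False
      then have "i = n" using that by simp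
      then show ?thesis using a frac_cancel_pow [of a E m] by (simp add: z'_def add.commute)
    qed
    then show ?case by blast
  qed
  then show thesis using that by blast
qed

lemma vecs_common_denominator:
  assumes y: "y \<in> vecs Rs n"
  obtains z E where "z \<in> vecs R n" "y = vsmult Rs n (frac \<one> E) (vec_map Rs n \<iota> z)"
proof -
  have "\<forall>i<n. y i \<in> carrier Rs" using y by (simp add: vecs_def)
  then obtain z E where z: "\<forall>i<n. z i \<in> carrier R" "\<forall>i<n. y i = frac (z i) E"
    by (rule common_denominator)
  let ?z = "\<lambda>i. if i < n then z i else \<zero>"
  have "?z \<in> vecs R n" using z by (simp add: vecs_def)
  moreover have "y = vsmult Rs n (frac \<one> E) (vec_map Rs n \<iota> ?z)"
    using y z by (auto simp: vecs_def vsmult_def vec_map_def fun_eq_iff)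
  ultimately show thesis by (rule that)
qed

lemma finite_subset_fracsE:
  assumes "finite A" "A \<subseteq> carrier Rs"
  obtains k :: nat and \<alpha> E where "\<forall>j<k. \<alpha> j \<in> carrier R" "A = (\<lambda>j. frac (\<alpha> j) E) ` {..<k}"
proof -
  obtain k :: nat and g where "A = g ` {i. i < k}"
    using assms(1) unfolding finite_conv_nat_seg_image by blast
  then have g: "A = g ` {..<k}" by (simp add: lessThan_def)
  then have "\<forall>j<k. g j \<in> carrier Rs" using assms(2) by auto
  then obtain \<alpha> E where \<alpha>: "\<forall>j<k. \<alpha> j \<in> carrier R" and g_eq: "\<forall>j<k. g j = frac (\<alpha> j) E"
    by (rule common_denominator)
  have "A = (\<lambda>j. frac (\<alpha> j) E) ` {..<k}"
    unfolding g using g_eq by (intro image_cong) simp_all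
  with \<alpha> show thesis by (rule that)
qed

end

section \<open>Coherence of R[1/s]\<close>

context localization_away
begin

lemma fracs_subset_genideal:
  assumes \<alpha>: "\<forall>j<k. \<alpha> j \<in> carrier R" and b: "\<forall>i<n. b i \<in> carrier R"
    and s_in: "\<forall>y\<in>Idl (\<alpha> ` {..<k}). \<exists>x\<in>vecs R n. s \<otimes> y = lin_comb R n x b"
  shows "(\<lambda>j. frac (\<alpha> j) E) ` {..<k} \<subseteq> Idl\<^bsub>Rs\<^esub> ((\<lambda>i. \<iota> (b i)) ` {..<n})"
proof -
  interpret Rs: cring Rs by (rule localization_cring)
  have "frac (\<alpha> j) E \<in> Idl\<^bsub>Rs\<^esub> ((\<lambda>i. \<iota> (b i)) ` {..<n})" if j: "j < k" for j
  proof -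
    have "\<alpha> ` {..<k} \<subseteq> carrier R" using \<alpha> by auto
    then have "\<alpha> j \<in> Idl (\<alpha> ` {..<k})" using genideal_self j by blast
    then obtain x where x: "x \<in> vecs R n" "s \<otimes> \<alpha> j = lin_comb R n x b" using s_in by blast
    have "frac (\<alpha> j) E = frac (\<alpha> j \<otimes> s [^] (1::nat)) (E + 1)"
      using \<alpha> j by (simp only: frac_cancel_pow)
    also have "\<dots> = frac \<one> (E + 1) \<otimes>\<^bsub>Rs\<^esub> \<iota> (lin_comb R n x b)"
      using \<alpha> j x(2) lin_comb_closed [OF x(1) b] by (simp add: m_comm)
    also have "\<dots> = lin_comb Rs n (vsmult Rs n (frac \<one> (E + 1)) (vec_map Rs n \<iota> x)) (\<lambda>i. \<iota> (b i))"
      using x(1) b by (simp add: frac_lin_comb Rs.lin_comb_vsmult vec_map_frac_closed)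
    finally have "frac (\<alpha> j) E = \<dots>" .
    moreover have "vsmult Rs n (frac \<one> (E + 1)) (vec_map Rs n \<iota> x) \<in> vecs Rs n"
      using x(1) by (simp add: Rs.vsmult_closed vec_map_frac_closed)
    moreover have "\<forall>i<n. \<iota> (b i) \<in> carrier Rs" using b by simp
    ultimately show ?thesis
      using Rs.genideal_eq_lin_combs [of n "\<lambda>i. \<iota> (b i)"] by blast
  qed
  then show ?thesis by blast
qed

lemma frac_genideal_numerators:
  assumes \<alpha>: "\<forall>j<k. \<alpha> j \<in> carrier R" and r: "r \<in> Idl (\<alpha> ` {..<k})"
  shows "\<iota> r \<in> Idl\<^bsub>Rs\<^esub> ((\<lambda>j. frac (\<alpha> j) E) ` {..<k})"
    (is "_ \<in> Idl\<^bsub>Rs\<^esub> ?A")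
proof -
  interpret Rs: cring Rs by (rule localization_cring)
  have A_closed: "?A \<subseteq> carrier Rs" using \<alpha> by auto
  have J: "ideal (Idl\<^bsub>Rs\<^esub> ?A) Rs" by (rule Rs.genideal_ideal [OF A_closed])
  have "\<alpha> j \<in> {r \<in> carrier R. \<iota> r \<in> Idl\<^bsub>Rs\<^esub> ?A}" if j: "j < k" for j
  proof -
    have eq: "\<iota> (\<alpha> j) = frac (\<alpha> j) E \<otimes>\<^bsub>Rs\<^esub> \<iota> (s [^] E)"
      using \<alpha> j frac_cancel_pow [of "\<alpha> j" E 0] by simp
    have "frac (\<alpha> j) E \<in> Idl\<^bsub>Rs\<^esub> ?A" using Rs.genideal_self [OF A_closed] j by auto
    then have "\<iota> (\<alpha> j) \<in> Idl\<^bsub>Rs\<^esub> ?A"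
      unfolding eq by (rule ideal.I_r_closed [OF J]) simp
    with \<alpha> j show ?thesis by blast
  qed
  then have "Idl (\<alpha> ` {..<k}) \<subseteq> {r \<in> carrier R. \<iota> r \<in> Idl\<^bsub>Rs\<^esub> ?A}"
    by (intro genideal_minimal ideal_vimage_frac J) blast
  then show ?thesis using r by blast
qed

lemma genideal_fracs_eq:
  assumes \<alpha>: "\<forall>j<k. \<alpha> j \<in> carrier R" and b: "\<forall>i<n. b i \<in> carrier R"
    and b_in: "\<forall>x\<in>vecs R n. lin_comb R n x b \<in> Idl (\<alpha> ` {..<k})"
    and s_in: "\<forall>y\<in>Idl (\<alpha> ` {..<k}). \<exists>x\<in>vecs R n. s \<otimes> y = lin_comb R n x b"
  shows "Idl\<^bsub>Rs\<^esub> ((\<lambda>j. frac (\<alpha> j) E) ` {..<k}) = Idl\<^bsub>Rs\<^esub> ((\<lambda>i. \<iota> (b i)) ` {..<n})"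
    (is "Idl\<^bsub>Rs\<^esub> ?A = Idl\<^bsub>Rs\<^esub> ?B")
proof -
  interpret Rs: cring Rs by (rule localization_cring)
  have "b i \<in> Idl (\<alpha> ` {..<k})" if "i < n" for i
    using b_in unit_vec_closed [OF that] lin_comb_unit_vec [OF b that] by metis
  then have B_sub: "?B \<subseteq> Idl\<^bsub>Rs\<^esub> ?A" using frac_genideal_numerators [OF \<alpha>] by blast
  have A_sub: "?A \<subseteq> Idl\<^bsub>Rs\<^esub> ?B" by (rule fracs_subset_genideal [OF \<alpha> b s_in])
  have "?A \<subseteq> carrier Rs" "?B \<subseteq> carrier Rs" using \<alpha> b by auto
  then show ?thesis
    using Rs.genideal_minimal [OF Rs.genideal_ideal A_sub] Rs.genideal_minimal [OF Rs.genideal_ideal B_sub]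
    by blast
qed

text \<open>
  Writing y = z/s^E, the syzygy condition becomes s^t (z \<cdot> b) = 0 in R; hence s^(t+1) z
  is in the R-span of v, and y is its image divided by s^(E+t+1).
\<close>

lemma syzygy_frac_in_vspan:
  assumes b: "\<forall>i<n. b i \<in> carrier R" and v: "\<forall>j<m. v j \<in> vecs R n"
    and s_syz: "\<forall>x\<in>vecs R n. lin_comb R n x b = \<zero> \<longrightarrow> vsmult R n s x \<in> vspan R n m v"
    and y: "y \<in> vecs Rs n" and y_syz: "lin_comb Rs n y (\<lambda>i. \<iota> (b i)) = \<zero>\<^bsub>Rs\<^esub>"
  shows "y \<in> vspan Rs n m (\<lambda>j. vec_map Rs n \<iota> (v j))"
proof -
  interpret Rs: cring Rs by (rule localization_cring)
  obtain z E where z: "z \<in> vecs R n" and y_eq: "y = vsmult Rs n (frac \<one> E) (vec_map Rs n \<iota> z)"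
    using vecs_common_denominator [OF y] .
  have w: "lin_comb R n z b \<in> carrier R" using lin_comb_closed [OF z b] .
  have "lin_comb Rs n y (\<lambda>i. \<iota> (b i)) = frac \<one> E \<otimes>\<^bsub>Rs\<^esub> \<iota> (lin_comb R n z b)"
    using z b by (simp add: y_eq frac_lin_comb Rs.lin_comb_vsmult vec_map_frac_closed)
  also have "\<dots> = frac (lin_comb R n z b) E" using w by simp
  finally obtain t :: nat where "s [^] t \<otimes> lin_comb R n z b = \<zero>"
    using y_syz w by (auto simp: frac_eq_iff)
  then have "lin_comb R n (vsmult R n (s [^] t) z) b = \<zero>"
    using z b by (simp add: lin_comb_vsmult)
  then have "vsmult R n s (vsmult R n (s [^] t) z) \<in> vspan R n m v"
    using s_syz vsmult_closed [OF _ z] by simp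
  moreover define e where "e = Suc t"
  then have "vsmult R n s (vsmult R n (s [^] t) z) = vsmult R n (s [^] e) z"
    using z by (auto simp: vsmult_def vecs_def fun_eq_iff m_ac)
  ultimately have "vec_map Rs n \<iota> (vsmult R n (s [^] e) z) \<in> vspan Rs n m (\<lambda>j. vec_map Rs n \<iota> (v j))"
    using vec_map_frac_vspan [OF v] by simp
  then have "vsmult Rs n (frac \<one> (E + e)) (vec_map Rs n \<iota> (vsmult R n (s [^] e) z))
      \<in> vspan Rs n m (\<lambda>j. vec_map Rs n \<iota> (v j))"
    using Rs.vsmult_vspan v by (simp add: vec_map_frac_closed)
  moreover have "vsmult Rs n (frac \<one> (E + e)) (vec_map Rs n \<iota> (vsmult R n (s [^] e) z)) = y"
  proof -
    have "frac (s [^] e \<otimes> z i) (E + e) = frac (z i) E" if "i < n" for i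
      using z that frac_cancel_pow [of "z i" e E] by (simp add: vecs_def m_comm)
    then show ?thesis
      using z by (auto simp: y_eq vsmult_def vec_map_def vecs_def fun_eq_iff)
  qed
  ultimately show ?thesis by simp
qed

lemma syzygies_frac_eq_vspan:
  assumes b: "\<forall>i<n. b i \<in> carrier R" and v: "\<forall>j<m. v j \<in> vecs R n"
    and v_syz: "\<forall>j<m. lin_comb R n (v j) b = \<zero>"
    and s_syz: "\<forall>x\<in>vecs R n. lin_comb R n x b = \<zero> \<longrightarrow> vsmult R n s x \<in> vspan R n m v"
  shows "{x \<in> vecs Rs n. lin_comb Rs n x (\<lambda>i. \<iota> (b i)) = \<zero>\<^bsub>Rs\<^esub>}
    = vspan Rs n m (\<lambda>j. vec_map Rs n \<iota> (v j))"
proof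
  interpret Rs: cring Rs by (rule localization_cring)
  have b': "\<forall>i<n. \<iota> (b i) \<in> carrier Rs" and v': "\<forall>j<m. vec_map Rs n \<iota> (v j) \<in> vecs Rs n"
    using b v by (simp_all add: vec_map_frac_closed)
  have "lin_comb Rs n (vec_map Rs n \<iota> (v j)) (\<lambda>i. \<iota> (b i)) = \<zero>\<^bsub>Rs\<^esub>" if "j < m" for j
  proof -
    have "lin_comb Rs n (vec_map Rs n \<iota> (v j)) (\<lambda>i. \<iota> (b i)) = \<iota> (lin_comb R n (v j) b)"
      using b v that by (intro frac_lin_comb [symmetric]) auto
    then show ?thesis using v_syz that by simp
  qed
  then show "vspan Rs n m (\<lambda>j. vec_map Rs n \<iota> (v j))
      \<subseteq> {x \<in> vecs Rs n. lin_comb Rs n x (\<lambda>i. \<iota> (b i)) = \<zero>\<^bsub>Rs\<^esub>}"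
    using Rs.vspan_subset_vecs [OF v'] Rs.lin_comb_vspan_eq_zero [OF v' b'] by auto
qed (use syzygy_frac_in_vspan [OF b v s_syz] in blast)

lemma coherent_localization:
  assumes "u_S_coherent R s"
  shows "coherent_ring Rs"
  unfolding coherent_ring_def
proof (intro allI impI, elim conjE)
  interpret Rs: cring Rs by (rule localization_cring)
  fix A assume "finite A" "A \<subseteq> carrier Rs"
  then obtain k :: nat and \<alpha> E where \<alpha>: "\<forall>j<k. \<alpha> j \<in> carrier R"
    and A: "A = (\<lambda>j. frac (\<alpha> j) E) ` {..<k}"
    by (rule finite_subset_fracsE)
  have "u_S_fp_ideal R s (Idl (\<alpha> ` {..<k}))"
    using assms \<alpha> unfolding u_S_coherent_def by auto
  then obtain n K b where "fg_submodule R n K" and b: "\<forall>i<n. b i \<in> carrier R"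
    and K_syz: "\<forall>x\<in>K. lin_comb R n x b = \<zero>"
    and b_in: "\<forall>x\<in>vecs R n. lin_comb R n x b \<in> Idl (\<alpha> ` {..<k})"
    and s_syz: "\<forall>x\<in>vecs R n. lin_comb R n x b = \<zero> \<longrightarrow> vsmult R n s x \<in> K"
    and s_in: "\<forall>y\<in>Idl (\<alpha> ` {..<k}). \<exists>x\<in>vecs R n. s \<otimes> y = lin_comb R n x b"
    unfolding u_S_fp_ideal_def by blast
  then obtain m v where v: "\<forall>j<m. v j \<in> vecs R n" and K: "K = vspan R n m v"
    unfolding fg_submodule_def by blast
  have I_eq: "Idl\<^bsub>Rs\<^esub> A = {y. \<exists>x\<in>vecs Rs n. y = lin_comb Rs n x (\<lambda>i. \<iota> (b i))}"
    unfolding A genideal_fracs_eq [OF \<alpha> b b_in s_in]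
    using b by (intro Rs.genideal_eq_lin_combs) simp
  have syz_eq: "{x \<in> vecs Rs n. lin_comb Rs n x (\<lambda>i. \<iota> (b i)) = \<zero>\<^bsub>Rs\<^esub>}
      = vspan Rs n m (\<lambda>j. vec_map Rs n \<iota> (v j))"
    using K_syz s_syz v gen_in_vspan [OF v] unfolding K by (intro syzygies_frac_eq_vspan b v) auto
  have "\<forall>j<m. vec_map Rs n \<iota> (v j) \<in> vecs Rs n"
    using v by (simp add: vec_map_frac_closed)
  then have "fg_submodule Rs n {x \<in> vecs Rs n. lin_comb Rs n x (\<lambda>i. \<iota> (b i)) = \<zero>\<^bsub>Rs\<^esub>}"
    unfolding fg_submodule_def syz_eq by (intro exI [of _ m] exI [of _ "\<lambda>j. vec_map Rs n \<iota> (v j)"]) simp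
  moreover have "\<forall>i<n. \<iota> (b i) \<in> carrier Rs" using b by simp
  ultimately show "fp_ideal Rs (Idl\<^bsub>Rs\<^esub> A)"
    unfolding fp_ideal_def I_eq by (intro exI [of _ n] exI [of _ "\<lambda>i. \<iota> (b i)"] conjI) simp_all
qed

end

theorem proposition3p14:
  fixes R :: "('a, 'b) ring_scheme" and S :: "'a set" and s :: 'a
  assumes "cring R"
    and "multiplicative_subset R S"
    and "s \<in> S"
    and "u_S_coherent R s"
  shows "coherent_ring (localization R s)"
proof -
  have "s \<in> carrier R" using assms(2,3) unfolding multiplicative_subset_def by auto
  with assms(1) have "localization_away R s" by (simp add: localization_away_def localization_away_axioms_def)
  then show ?thesis using assms(4) by (rule localization_away.coherent_localization)
qed

end
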